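(* Let $n \geq d \geq 1$, let $\bar{w}\in\mathbb{R}^d$, let $\bar{\pi}$ be a permutation of $[n]$, let $x_0,x_1,\dots,x_n$ be i.i.d.\ draws from $N(0,I_d)$, and set $y_0 := \bar{w}^\top x_0$, $y_i := \bar{w}^\top x_{\bar{\pi}(i)}$ for $i\in[n]$. Let $X = [x_1|\cdots|x_n]^\top\in\mathbb{R}^{n\times d}$, let $X^\dagger = [\tilde{x}_1|\cdots|\tilde{x}_n]$ be its Moore–Penrose pseudoinverse, and let $c_{i,j} := y_i\,\tilde{x}_j^\top x_0$ for $(i,j)\in[n]\times[n]$. Then $X$ has rank $d$ almost surely, and the set $\mathcal{S}_{\bar{\pi}} := \{(i,j)\in[n]\times[n] : \bar{\pi}(i) = j\}$ satisfies $y_0 = \sum_{(i,j)\in\mathcal{S}_{\bar{\pi}}} c_{i,j}$ (almost surely). *)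

theory Defs
  imports "HOL-Probability.Probability"
begin

definition std_gaussian_density :: "real^'d \<Rightarrow> real" where
  "std_gaussian_density x = (2 * pi) powr (- real CARD('d) / 2) * exp (- (norm x)\<^sup>2 / 2)"

definition pseudoinverse :: "real^'m^'n \<Rightarrow> real^'n^'m" where
  "pseudoinverse A = (THE B. A ** B ** A = A \<and> B ** A ** B = B \<and>
      transpose (A ** B) = A ** B \<and> transpose (B ** A) = B ** A)"

end

theory Submission
  imports Defs
begin

text \<open>If \<open>X\<close> has full column rank \<open>d\<close>, the Gram matrix \<open>X\<^sup>T X\<close> is invertible and the
  pseudoinverse is the left inverse \<open>(X\<^sup>T X)\<^sup>-\<^sup>1 X\<^sup>T\<close>. Hence \<open>x\<^sub>0 = X\<^sup>T (X\<^sup>\<dagger>)\<^sup>T x\<^sub>0\<close>, i.e.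
  \<open>w\<^sup>T x\<^sub>0 = \<Sum>\<^sub>j (w\<^sup>T x\<^sub>j) (x\<^sub>j'\<^sup>T x\<^sub>0)\<close> with \<open>x\<^sub>j'\<close> the columns of \<open>X\<^sup>\<dagger>\<close>, and reindexing
  along the bijection \<open>\<pi>\<close> turns this into the sum over \<open>S\<^sub>\<pi>\<close>. Full rank holds almost surely:
  adding the rows one at a time, each new Gaussian row is independent of the previous ones and
  has a density, so by Fubini it almost surely avoids their span, which is a Lebesgue null set
  as long as fewer than \<open>d\<close> rows have been added.\<close>

lemma span_rows_eq_range:
  fixes A :: "real^'d^'n"
  shows "span (rows A) = range (\<lambda>c. c v* A)"
proof
  have "rows A \<subseteq> range (\<lambda>c. c v* A)"
    by (metis columns_image_basis columns_transpose image_subsetI rangeI transpose_matrix_vector)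
  moreover have "subspace (range (\<lambda>c. c v* A))"
    using linear_subspace_image[OF matrix_vector_mul_linear subspace_UNIV, of "transpose A"]
    by simp
  ultimately show "span (rows A) \<subseteq> range (\<lambda>c. c v* A)"
    by (rule span_minimal)
  show "range (\<lambda>c. c v* A) \<subseteq> span (rows A)"
    by (metis columns_transpose image_subsetI matrix_vector_mult_in_columnspace transpose_matrix_vector)
qed

lemma invertible_Gram_matrix:
  fixes X :: "real^'d^'n"
  assumes "rank X = CARD('d)"
  shows "invertible (transpose X ** X)"
proof -
  have "inj ((*v) (transpose X ** X))"
  proof (rule linear_injective_0[OF matrix_vector_mul_linear, THEN iffD2], intro allI impI)
    fix z assume "(transpose X ** X) *v z = 0"
    then have "(X *v z) \<bullet> (X *v z) = 0"
      by (metis dot_lmul_matrix inner_zero_right matrix_vector_mul_assoc vector_transpose_matrix)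
    then show "z = 0"
      using assms full_rank_injective by (metis inner_eq_zero_iff injD matrix_vector_mult_0_right)
  qed
  then show ?thesis
    by (simp add: invertible_left_inverse matrix_left_invertible_injective)
qed

lemma inner_eq_sum_left_inverse:
  fixes X :: "real^'d^'n" and P :: "real^'n^'d"
  assumes "P ** X = mat 1"
  shows "w \<bullet> v = (\<Sum>j\<in>UNIV. (w \<bullet> X $ j) * (column j P \<bullet> v))"
proof -
  have "v = transpose X *v (transpose P *v v)"
    by (metis assms matrix_transpose_mul matrix_vector_mul_assoc matrix_vector_mul_lid transpose_mat)
  then have "w \<bullet> v = (X *v w) \<bullet> (transpose P *v v)"
    by (metis dot_lmul_matrix vector_transpose_matrix)
  also have "\<dots> = (\<Sum>j\<in>UNIV. (w \<bullet> X $ j) * (column j P \<bullet> v))"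
    by (simp add: inner_vec_def matrix_vector_mult_def column_def transpose_def inner_commute mult_ac)
  finally show ?thesis .
qed

lemma pseudoinverse_full_column_rank:
  fixes X :: "real^'d^'n"
  assumes "rank X = CARD('d)"
  shows "pseudoinverse X ** X = mat 1"
proof -
  define G where "G = transpose X ** X"
  obtain Gi where GGi: "G ** Gi = mat 1" and GiG: "Gi ** G = mat 1"
    using invertible_Gram_matrix[OF assms] unfolding G_def invertible_def by blast
  have "transpose Gi ** G = mat 1"
    using GGi by (metis G_def matrix_transpose_mul transpose_mat transpose_transpose)
  then have Gi_sym: "transpose Gi = Gi"
    using GGi by (metis matrix_mul_assoc matrix_mul_lid matrix_mul_rid)
  define L where "L = Gi ** transpose X"
  have LX: "L ** X = mat 1"
    using GiG by (simp add: L_def G_def matrix_mul_assoc)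
  have "pseudoinverse X = L"
    unfolding pseudoinverse_def
  proof (rule the_equality)
    have "X ** L ** X = X"
      by (simp add: LX flip: matrix_mul_assoc)
    moreover have "transpose (X ** L) = X ** L"
      by (simp add: L_def Gi_sym matrix_mul_assoc matrix_transpose_mul)
    ultimately show "X ** L ** X = X \<and> L ** X ** L = L \<and>
        transpose (X ** L) = X ** L \<and> transpose (L ** X) = L ** X"
      by (simp add: LX)
  next
    fix B
    assume "X ** B ** X = X \<and> B ** X ** B = B \<and>
        transpose (X ** B) = X ** B \<and> transpose (B ** X) = B ** X"
    then have XBX: "X ** B ** X = X" and XB_sym: "transpose (X ** B) = X ** B"
      by auto
    have "transpose X = transpose (X ** B ** X)"
      using XBX by simp
    also have "\<dots> = transpose X ** transpose (X ** B)"
      by (simp add: matrix_transpose_mul)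
    also have "\<dots> = G ** B"
      using XB_sym by (simp add: G_def matrix_mul_assoc)
    finally have "Gi ** transpose X = Gi ** G ** B"
      by (simp add: matrix_mul_assoc)
    then show "B = L"
      using GiG by (simp add: L_def)
  qed
  with LX show ?thesis by simp
qed

lemma sum_graph_bij:
  assumes "bij \<pi>"
  shows "(\<Sum>(i, j) \<in> {(i, j). \<pi> i = j}. f (\<pi> i) j) = (\<Sum>j\<in>UNIV. f j j)"
proof -
  have "{(i, j). \<pi> i = j} = (\<lambda>i. (i, \<pi> i)) ` UNIV" by auto
  then have "(\<Sum>(i, j) \<in> {(i, j). \<pi> i = j}. f (\<pi> i) j) = (\<Sum>i\<in>UNIV. f (\<pi> i) (\<pi> i))"
    by (simp add: sum.reindex inj_on_def)
  also have "\<dots> = (\<Sum>j\<in>UNIV. f j j)"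
    using sum.reindex_bij_betw[OF assms] .
  finally show ?thesis .
qed

lemma borel_span_rows:
  "{p :: (real^'d^'n) \<times> (real^'d). snd p \<in> span (rows (fst p))} \<in> sets borel" (is "?S \<in> _")
proof -
  define g :: "(real^'d^'n) \<times> (real^'n) \<Rightarrow> (real^'d^'n) \<times> (real^'d)"
    where "g q = (fst q, snd q v* fst q)" for q
  have "?S = g ` UNIV"
    by (auto simp: g_def span_rows_eq_range image_iff prod_eq_iff)
  also have "\<dots> = g ` (\<Union>k::nat. cball 0 (real k))"
    by (auto simp: real_arch_simple)
  also have "\<dots> = (\<Union>k::nat. g ` cball 0 (real k))"
    by (rule image_UN)
  finally have "?S = (\<Union>k::nat. g ` cball 0 (real k))" .
  moreover have "compact (g ` cball 0 (real k))" for k :: nat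
    unfolding g_def vector_matrix_mult_def by (intro compact_continuous_image continuous_intros) auto
  ultimately show ?thesis
    by (simp add: borel_closed compact_imp_closed sets.countable_UN)
qed

lemma span_lowdim_null_sets:
  fixes T :: "'a::euclidean_space set"
  assumes "dim T < DIM('a)"
  shows "span T \<in> null_sets lborel"
proof -
  have "negligible (span T)"
    using assms by (intro negligible_lowdim) (simp add: dim_span)
  then show ?thesis
    using borel_closed[OF closed_span[of T]]
    by (simp add: negligible_iff_null_sets null_sets_completion_iff)
qed

lemma distributed_vimage_span_null:
  fixes Z :: "'a \<Rightarrow> 'b::euclidean_space"
  assumes "distributed M lborel Z f" and "dim T < DIM('b)"
  shows "Z -` span T \<inter> space M \<in> null_sets M"
proof -
  have "span T \<in> null_sets lborel"
    using assms(2) by (rule span_lowdim_null_sets)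
  then have "span T \<in> null_sets (distr M lborel Z)"
    using absolutely_continuousI_density[OF distributed_borel_measurable[OF assms(1)]]
    by (auto simp: distributed_distr_eq_density[OF assms(1)] absolutely_continuous_def)
  then show ?thesis
    using distributed_measurable[OF assms(1)] by (simp add: null_sets_distr_iff)
qed

lemma (in prob_space) AE_notin_indep_var:
  assumes indep: "indep_var N X K Z" and S: "S \<in> sets (N \<Otimes>\<^sub>M K)"
    and null: "\<And>\<omega>. \<omega> \<in> space M \<Longrightarrow> Pair (X \<omega>) -` S \<in> null_sets (distr M K Z)"
  shows "AE \<omega> in M. (X \<omega>, Z \<omega>) \<notin> S"
proof -
  have X: "X \<in> measurable M N" and Z: "Z \<in> measurable M K"
    and joint: "distr M N X \<Otimes>\<^sub>M distr M K Z = distr M (N \<Otimes>\<^sub>M K) (\<lambda>\<omega>. (X \<omega>, Z \<omega>))"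
    using indep_var_distribution_eq indep by blast+
  interpret Z: prob_space "distr M K Z"
    by (rule prob_space_distr[OF Z])
  have XZ: "(\<lambda>\<omega>. (X \<omega>, Z \<omega>)) \<in> measurable M (N \<Otimes>\<^sub>M K)"
    using X Z by (rule measurable_Pair)
  have "emeasure M ((\<lambda>\<omega>. (X \<omega>, Z \<omega>)) -` S \<inter> space M)
      = emeasure (distr M N X \<Otimes>\<^sub>M distr M K Z) S"
    using S XZ by (simp add: joint emeasure_distr)
  also have "\<dots> = (\<integral>\<^sup>+u. emeasure (distr M K Z) (Pair u -` S) \<partial>distr M N X)"
    using S by (simp add: Z.emeasure_pair_measure_alt)
  also have "\<dots> = (\<integral>\<^sup>+\<omega>. emeasure (distr M K Z) (Pair (X \<omega>) -` S) \<partial>M)"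
    using S X by (intro nn_integral_distr Z.measurable_emeasure_Pair) auto
  also have "\<dots> = (\<integral>\<^sup>+\<omega>. 0 \<partial>M)"
    using null by (intro nn_integral_cong) (simp add: null_setsD1)
  also have "\<dots> = 0"
    by simp
  finally show ?thesis
    using S XZ by (intro AE_I'[where N = "(\<lambda>\<omega>. (X \<omega>, Z \<omega>)) -` S \<inter> space M"]) auto
qed

lemma borel_measurable_axis:
  fixes k :: "'n::finite"
  shows "(axis k :: real^'d \<Rightarrow> real^'d^'n) \<in> borel_measurable borel"
proof -
  have "linear (axis k :: real^'d \<Rightarrow> real^'d^'n)"
    by (auto simp: linear_iff axis_def vec_eq_iff)
  then show ?thesis
    by (intro borel_measurable_continuous_onI linear_continuous_on linear_conv_bounded_linear[THEN iffD1])
qed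

text \<open>\<open>indep_var\<close> compares two variables with values in the same space, so the
  new row is embedded as the matrix \<open>axis a (x a \<omega>)\<close>.\<close>

lemma (in prob_space) indep_var_rows_axis:
  fixes x :: "'n::finite \<Rightarrow> 'a \<Rightarrow> real^'d"
  assumes indep: "indep_vars (\<lambda>_. borel) x UNIV" and "a \<notin> I"
  shows "indep_var borel (\<lambda>\<omega>. \<chi> k. if k \<in> I then x k \<omega> else 0) borel (\<lambda>\<omega>. axis a (x a \<omega>))"
proof -
  define h :: "('n \<Rightarrow> real^'d) \<Rightarrow> real^'d^'n" where "h f = (\<Sum>k\<in>I. axis k (f k))" for f
  have "indep_var (PiM I (\<lambda>_. borel)) (\<lambda>\<omega>. restrict (\<lambda>i. x i \<omega>) I)
      (PiM {a} (\<lambda>_. borel)) (\<lambda>\<omega>. restrict (\<lambda>i. x i \<omega>) {a})"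
    using \<open>a \<notin> I\<close> by (intro indep_var_restrict[OF indep]) auto
  moreover have "h \<in> borel_measurable (PiM I (\<lambda>_. borel))"
    unfolding h_def using borel_measurable_axis by measurable
  moreover have "(\<lambda>f. axis a (f a) :: real^'d^'n) \<in> borel_measurable (PiM {a} (\<lambda>_. borel))"
    using borel_measurable_axis by measurable
  ultimately have "indep_var borel (h \<circ> (\<lambda>\<omega>. restrict (\<lambda>i. x i \<omega>) I))
      borel ((\<lambda>f. axis a (f a)) \<circ> (\<lambda>\<omega>. restrict (\<lambda>i. x i \<omega>) {a}))"
    by (rule indep_var_compose)
  moreover have "h (restrict (\<lambda>i. x i \<omega>) I) = (\<chi> k. if k \<in> I then x k \<omega> else 0)" for \<omega>
    by (simp add: h_def vec_eq_iff axis_def if_distrib cong: if_cong)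
  ultimately show ?thesis
    by (simp add: comp_def)
qed

lemma (in prob_space) AE_notin_span_indep:
  fixes x :: "'n::finite \<Rightarrow> 'a \<Rightarrow> real^'d"
  assumes indep: "indep_vars (\<lambda>_. borel) x UNIV"
    and density: "distributed M lborel (x a) f"
    and "a \<notin> I" and card: "card I < CARD('d)"
  shows "AE \<omega> in M. x a \<omega> \<notin> span ((\<lambda>i. x i \<omega>) ` I)"
proof -
  define Y where "Y \<omega> = (\<chi> k. if k \<in> I then x k \<omega> else 0)" for \<omega>
  define S where "S = {p :: (real^'d^'n) \<times> (real^'d^'n). snd p $ a \<in> span (rows (fst p))}"
  have span_Y: "span (rows (Y \<omega>)) = span ((\<lambda>i. x i \<omega>) ` I)" for \<omega>
  proof -
    have "rows (Y \<omega>) - {0} \<subseteq> (\<lambda>i. x i \<omega>) ` I" "(\<lambda>i. x i \<omega>) ` I \<subseteq> rows (Y \<omega>)"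
      by (auto simp: rows_def row_def Y_def vec_lambda_eta)
    then show ?thesis
      by (metis span_insert_0 span_mono subset_antisym insert_Diff_single span_eq_iff)
  qed
  have "AE \<omega> in M. (Y \<omega>, axis a (x a \<omega>)) \<notin> S"
  proof (rule AE_notin_indep_var)
    show "indep_var borel Y borel (\<lambda>\<omega>. axis a (x a \<omega>))"
      unfolding Y_def using indep \<open>a \<notin> I\<close> by (rule indep_var_rows_axis)
    have "(\<lambda>p :: (real^'d^'n) \<times> (real^'d^'n). (fst p, snd p $ a)) \<in> borel_measurable borel"
      by (intro borel_measurable_continuous_onI continuous_intros)
    from measurable_sets[OF this borel_span_rows]
    show "S \<in> sets (borel \<Otimes>\<^sub>M borel)"
      unfolding borel_prod by (simp add: S_def vimage_def)
  next
    fix \<omega>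
    let ?T = "span ((\<lambda>i. x i \<omega>) ` I)"
    have "dim ((\<lambda>i. x i \<omega>) ` I) \<le> card ((\<lambda>i. x i \<omega>) ` I)"
      by (intro dim_le_card span_superset) auto
    also have "\<dots> \<le> card I"
      by (rule card_image_le) simp
    finally have "x a -` ?T \<inter> space M \<in> null_sets M"
      using card by (intro distributed_vimage_span_null[OF density]) simp
    moreover have "(\<lambda>B :: real^'d^'n. B $ a) -` ?T \<in> sets borel"
      by (intro borel_closed continuous_closed_vimage closed_span continuous_intros)
    moreover have "Pair (Y \<omega>) -` S = (\<lambda>B. B $ a) -` ?T"
      by (simp add: S_def span_Y vimage_def)
    moreover have "x a \<in> borel_measurable M"
      using indep by (simp add: indep_vars_def)
    ultimately show "Pair (Y \<omega>) -` S \<in> null_sets (distr M borel (\<lambda>\<omega>. axis a (x a \<omega>)))"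
      using measurable_compose[OF _ borel_measurable_axis]
      by (subst null_sets_distr_iff) (auto simp: vimage_def)
  qed
  then show ?thesis
    by (simp add: S_def span_Y)
qed

lemma (in prob_space) AE_dim_image_indep:
  fixes x :: "'i::finite \<Rightarrow> 'a \<Rightarrow> real^'d"
  assumes indep: "indep_vars (\<lambda>_. borel) x UNIV"
    and density: "\<And>i. distributed M lborel (x i) (f i)"
    and "card I \<le> CARD('d)"
  shows "AE \<omega> in M. dim ((\<lambda>i. x i \<omega>) ` I) = card I"
proof -
  have "finite I" by simp
  then show ?thesis
    using \<open>card I \<le> CARD('d)\<close>
  proof (induction I rule: finite_induct)
    case empty
    then show ?case by simp
  next
    case (insert a I)
    then have "AE \<omega> in M. dim ((\<lambda>i. x i \<omega>) ` I) = card I"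
      by simp
    moreover have "AE \<omega> in M. x a \<omega> \<notin> span ((\<lambda>i. x i \<omega>) ` I)"
      using insert by (intro AE_notin_span_indep[OF indep density]) auto
    ultimately show ?case
      by eventually_elim (use insert in \<open>simp add: dim_insert\<close>)
  qed
qed

lemma (in prob_space) AE_rank_full_column:
  fixes x :: "'i::finite \<Rightarrow> 'a \<Rightarrow> real^'d" and e :: "'n::finite \<Rightarrow> 'i"
  assumes indep: "indep_vars (\<lambda>_. borel) x UNIV"
    and density: "\<And>i. distributed M lborel (x i) (f i)"
    and "inj e" and "CARD('d) \<le> CARD('n)"
  shows "AE \<omega> in M. rank (\<chi> k. x (e k) \<omega> :: real^'d^'n) = CARD('d)"
proof -
  obtain J :: "'n set" where J: "card J = CARD('d)"
    using obtain_subset_with_card_n[OF \<open>CARD('d) \<le> CARD('n)\<close>] by metis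
  have card_eJ: "card (e ` J) = CARD('d)"
    using J \<open>inj e\<close> by (simp add: card_image inj_on_subset)
  have "AE \<omega> in M. dim ((\<lambda>i. x i \<omega>) ` e ` J) = CARD('d)"
    using AE_dim_image_indep[OF indep density, of "e ` J"] card_eJ by simp
  then show ?thesis
  proof eventually_elim
    case (elim \<omega>)
    let ?X = "\<chi> k. x (e k) \<omega> :: real^'d^'n"
    have "(\<lambda>i. x i \<omega>) ` e ` J \<subseteq> rows ?X"
      by (auto simp: rows_def row_def vec_lambda_eta)
    then have "CARD('d) \<le> rank ?X"
      unfolding row_rank_def using elim by (metis dim_subset)
    then show ?case
      using rank_bound[of ?X] by simp
  qed
qed

theorem mainTheorem2:
  fixes M :: "'a measure"
    and x :: "'n::finite option \<Rightarrow> 'a \<Rightarrow> real^'d::finite"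
    and w :: "real^'d"
    and \<pi> :: "'n \<Rightarrow> 'n"
  assumes "prob_space M"
    and "CARD('d) \<le> CARD('n)"
    and "bij \<pi>"
    and "prob_space.indep_vars M (\<lambda>_. borel) x UNIV"
    and "\<And>i. distributed M lborel (x i) (\<lambda>v. ennreal (std_gaussian_density v))"
  shows "AE \<omega> in M.
     (let x0 = x None \<omega>;
          X = (\<chi> i. x (Some i) \<omega>) :: real^'d^'n;
          y0 = w \<bullet> x0;
          y = (\<lambda>i. w \<bullet> x (Some (\<pi> i)) \<omega>);
          c = (\<lambda>i j. y i * (column j (pseudoinverse X) \<bullet> x0))
      in rank X = CARD('d) \<and> y0 = (\<Sum>(i, j) \<in> {(i, j). \<pi> i = j}. c i j))"
proof -
  interpret prob_space M by fact
  have "AE \<omega> in M. rank (\<chi> i. x (Some i) \<omega> :: real^'d^'n) = CARD('d)"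
    by (rule AE_rank_full_column[OF assms(4,5) inj_Some assms(2)])
  then show ?thesis
  proof eventually_elim
    case (elim \<omega>)
    let ?X = "\<chi> i. x (Some i) \<omega> :: real^'d^'n"
    let ?c = "\<lambda>k j. (w \<bullet> ?X $ k) * (column j (pseudoinverse ?X) \<bullet> x None \<omega>)"
    have "w \<bullet> x None \<omega> = (\<Sum>j\<in>UNIV. ?c j j)"
      by (rule inner_eq_sum_left_inverse[OF pseudoinverse_full_column_rank[OF elim]])
    also have "\<dots> = (\<Sum>(i, j) \<in> {(i, j). \<pi> i = j}. ?c (\<pi> i) j)"
      by (rule sum_graph_bij[OF assms(3), symmetric])
    finally show ?case
      using elim by (simp add: Let_def)
  qed
qed

end
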